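(* Let $d\ge1$, let $|\cdot|$ be a Euclidean norm on $\mathbb{R}^d$, let $p\in(0,+\infty)$ and let $X$ be an $\mathbb{R}^d$-valued random vector with $\mathbb{E}|X|^p<+\infty$ and distribution $\mu$. Let $\overline{\mathcal{H}}_\mu$ be the closed convex hull of $\operatorname{supp}(\mu)$. Let $(a_N)_{N\ge1}$ be an $L^p$-optimal greedy quantization sequence for $X$. If $\operatorname{supp}(\mu)$ contains at least $N$ elements, then $a_1,\dots,a_N\in\overline{\mathcal{H}}_\mu$. If $\operatorname{supp}(\mu)$ is infinite, then $a_n\in\overline{\mathcal{H}}_\mu$ for every $n\ge1$.
   Context: For $\Gamma\subset\mathbb{R}^d$ put $e_p(\Gamma,X)=\big(\mathbb{E}\,d(X,\Gamma)^p\big)^{1/p}$ with $d(\xi,\Gamma)=\inf_{a\in\Gamma}|\xi-a|$ ($d(\xi,\emptyset)=+\infty$). A sequence $(a_N)_{N\ge1}$ in $\mathbb{R}^d$ is an $L^p$-optimal greedy quantization sequence if, writing $a^{(N)}=\{a_1,\dots,a_N\}$ and $a^{(0)}=\emptyset$, one has $a_{N+1}\in\operatorname{argmin}_{\xi\in\mathbb{R}^d}e_p(a^{(N)}\cup\{\xi\},X)$ for every $N\ge0$. *)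

theory Defs
  imports "HOL-Probability.Probability"
begin

definition msupp :: "'a::metric_space measure \<Rightarrow> 'a set" where
  "msupp M = {x. \<forall>e>0. emeasure M (ball x e) > 0}"

definition Lp_err_pow :: "real \<Rightarrow> 'a::metric_space measure \<Rightarrow> 'a set \<Rightarrow> ennreal" where
  "Lp_err_pow p M \<Gamma> = (if \<Gamma> = {} then \<infinity> else (\<integral>\<^sup>+ x. ennreal (infdist x \<Gamma> powr p) \<partial>M))"

(* a :: nat \<Rightarrow> 'a, used at indices n \<ge> 1; a^(N) = a ` {1..N}. *)
definition greedy_quant_seq :: "real \<Rightarrow> 'a::metric_space measure \<Rightarrow> (nat \<Rightarrow> 'a) \<Rightarrow> bool" where
  "greedy_quant_seq p M a \<longleftrightarrow>
     (\<forall>N. \<forall>\<xi>. Lp_err_pow p M (a ` {1..N} \<union> {a (Suc N)}) \<le> Lp_err_pow p M (a ` {1..N} \<union> {\<xi>}))"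

end

theory Submission
  imports Defs
begin

text \<open>
  Let \<open>\<Gamma>\<close> be the first \<open>N\<close> greedy points and \<open>H\<close> the closed convex hull of the support.
  If the next point \<open>\<xi>\<close> lay outside \<open>H\<close>, its projection \<open>\<pi>\<close> onto \<open>H\<close> would be strictly closer
  than \<open>\<xi>\<close> to every point of \<open>H\<close>, hence to almost every sample. Optimality of \<open>\<xi>\<close> then forces
  \<open>\<xi>\<close> to be almost surely never the nearest point of \<open>\<Gamma> \<union> {\<xi>}\<close>, so adding \<open>\<xi>\<close> does not
  decrease the error at all. But adding a support point \<open>s \<notin> \<Gamma>\<close>, which exists by the
  cardinality hypothesis, strictly decreases it, because a ball around \<open>s\<close> has positive mass.
\<close>

lemma borel_measurable_infdist_powr:
  fixes A :: "'a::metric_space set"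
  assumes "sets M = sets borel"
  shows "(\<lambda>x. ennreal (infdist x A powr p)) \<in> borel_measurable M"
proof -
  have "continuous_on UNIV (\<lambda>x::'a. infdist x A)"
    by (intro continuous_at_imp_continuous_on ballI continuous_infdist continuous_ident)
  then have [measurable]: "(\<lambda>x::'a. infdist x A) \<in> borel_measurable borel"
    by (rule borel_measurable_continuous_onI)
  show ?thesis
    by (subst measurable_cong_sets[OF assms refl]) measurable
qed

lemma powr_add_le_two_powr:
  fixes u v p :: real
  assumes "u \<ge> 0" "v \<ge> 0" "p \<ge> 0"
  shows "(u + v) powr p \<le> 2 powr p * (u powr p + v powr p)"
proof -
  have "(u + v) powr p \<le> (2 * max u v) powr p"
    by (rule powr_mono2) (use assms in auto)
  also have "\<dots> = 2 powr p * max u v powr p"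
    using assms by (simp add: powr_mult)
  also have "\<dots> \<le> 2 powr p * (u powr p + v powr p)"
    using assms by (intro mult_left_mono) (auto simp: max_def)
  finally show ?thesis .
qed

lemma Lp_err_pow_less_top:
  fixes M :: "'a::real_normed_vector measure"
  assumes "prob_space M" "sets M = sets borel" "p \<ge> 0"
    and moment: "(\<integral>\<^sup>+ x. ennreal (norm x powr p) \<partial>M) < \<infinity>"
    and "\<Gamma> \<noteq> {}"
  shows "Lp_err_pow p M \<Gamma> < \<infinity>"
proof -
  obtain \<gamma> where "\<gamma> \<in> \<Gamma>" using assms(5) by blast
  have norm_powr_measurable[measurable]: "(\<lambda>x. ennreal (norm x powr p)) \<in> borel_measurable M"
    by (subst measurable_cong_sets[OF assms(2) refl]) measurable
  have pointwise: "ennreal (infdist x \<Gamma> powr p)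
      \<le> ennreal (2 powr p) * ennreal (norm x powr p) + ennreal (2 powr p * norm \<gamma> powr p)" for x
  proof -
    have "infdist x \<Gamma> \<le> norm x + norm \<gamma>"
      using infdist_le[OF \<open>\<gamma> \<in> \<Gamma>\<close>, of x] norm_triangle_ineq4[of x \<gamma>] by (simp add: dist_norm)
    then have "infdist x \<Gamma> powr p \<le> (norm x + norm \<gamma>) powr p"
      by (intro powr_mono2) (use assms infdist_nonneg in auto)
    also have "\<dots> \<le> 2 powr p * (norm x powr p + norm \<gamma> powr p)"
      by (rule powr_add_le_two_powr) (use assms in auto)
    finally show ?thesis
      by (simp add: ennreal_mult[symmetric] ennreal_plus[symmetric] distrib_left del: ennreal_plus)
  qed
  have "Lp_err_pow p M \<Gamma>
      \<le> (\<integral>\<^sup>+ x. ennreal (2 powr p) * ennreal (norm x powr p) + ennreal (2 powr p * norm \<gamma> powr p) \<partial>M)"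
    unfolding Lp_err_pow_def using assms(5) by (simp add: nn_integral_mono pointwise)
  also have "\<dots> = ennreal (2 powr p) * (\<integral>\<^sup>+ x. ennreal (norm x powr p) \<partial>M) + ennreal (2 powr p * norm \<gamma> powr p)"
    using nn_integral_cmult[OF norm_powr_measurable, of "2 powr p"]
    by (subst nn_integral_add) (auto simp: prob_space.emeasure_space_1[OF assms(1)])
  also have "\<dots> < \<infinity>"
    using moment by (simp add: ennreal_mult_less_top)
  finally show ?thesis .
qed

lemma AE_in_msupp:
  fixes M :: "'a::{metric_space, second_countable_topology} measure"
  assumes "sets M = sets borel"
  shows "AE x in M. x \<in> msupp M"
proof -
  define F where "F = {ball y e | y e. e > 0 \<and> emeasure M (ball y e) = 0}"
  obtain F' where F': "F' \<subseteq> F" "countable F'" "\<Union>F' = \<Union>F"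
    using Lindelof[of F] unfolding F_def by auto
  have outside_covered: "x \<in> \<Union>F" if "x \<notin> msupp M" for x
  proof -
    from that obtain e where "e > 0" "emeasure M (ball x e) = 0"
      unfolding msupp_def by (auto simp: not_less)
    then have "ball x e \<in> F"
      unfolding F_def by auto
    then show ?thesis
      using \<open>e > 0\<close> by (intro UnionI[of "ball x e"]) auto
  qed
  have "AE x in M. \<forall>b\<in>F'. x \<notin> b"
  proof (rule AE_ball_countable')
    fix b assume "b \<in> F'"
    then obtain y e where "b = ball y e" "emeasure M (ball y e) = 0"
      using F' unfolding F_def by auto
    then have "b \<in> null_sets M"
      using assms by (simp add: null_setsI)
    then show "AE x in M. x \<notin> b" by (rule AE_not_in)
  qed (use F' in auto)
  then show ?thesis
  proof eventually_elim
    case (elim x)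
    then have "x \<notin> \<Union>F"
      unfolding F'(3)[symmetric] by blast
    then show ?case
      using outside_covered by blast
  qed
qed

lemma dist_closest_point_less:
  fixes \<xi> :: "'a::{real_inner, heine_borel}"
  assumes "convex H" "closed H" "x \<in> H" "\<xi> \<notin> H"
  shows "dist x (closest_point H \<xi>) < dist x \<xi>"
proof -
  define \<pi> where "\<pi> = closest_point H \<xi>"
  have obtuse: "inner (\<xi> - \<pi>) (x - \<pi>) \<le> 0"
    unfolding \<pi>_def by (rule closest_point_dot[OF assms(1-3)])
  have "\<pi> \<in> H"
    unfolding \<pi>_def using assms(2,3) by (auto intro: closest_point_in_set)
  then have "0 < (dist \<xi> \<pi>)\<^sup>2"
    using assms(4) by auto
  moreover have "(dist x \<xi>)\<^sup>2 = (dist x \<pi>)\<^sup>2 + (dist \<xi> \<pi>)\<^sup>2 - 2 * inner (\<xi> - \<pi>) (x - \<pi>)"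
    unfolding dist_norm power2_norm_eq_inner
    by (simp add: inner_diff_left inner_diff_right inner_commute)
  ultimately have "(dist x \<pi>)\<^sup>2 < (dist x \<xi>)\<^sup>2"
    using obtuse by linarith
  then show ?thesis
    unfolding \<pi>_def by (rule power_less_imp_less_base) simp
qed

lemma infdist_Un_singleton:
  "A \<noteq> {} \<Longrightarrow> infdist x (A \<union> {y}) = min (infdist x A) (dist x y)"
  using infdist_Un_min[of A "{y}" x] by simp

lemma infdist_Un_singleton_mono:
  "dist x y \<le> dist x z \<Longrightarrow> infdist x (A \<union> {y}) \<le> infdist x (A \<union> {z})"
  by (cases "A = {}") (auto simp: infdist_Un_singleton simp del: Un_insert_right)

lemma infdist_Un_singleton_strict_mono:
  assumes "dist x y < dist x z" "A = {} \<or> dist x z < infdist x A"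
  shows "infdist x (A \<union> {y}) < infdist x (A \<union> {z})"
  using assms by (cases "A = {}") (auto simp: infdist_Un_singleton simp del: Un_insert_right)

lemma ennreal_powr_mono:
  fixes u v p :: real
  assumes "0 \<le> u" "u \<le> v" "0 \<le> p"
  shows "ennreal (u powr p) \<le> ennreal (v powr p)"
  using assms by (intro ennreal_leI powr_mono2) auto

lemma ennreal_powr_strict_mono:
  fixes u v p :: real
  assumes "0 \<le> u" "u < v" "0 < p"
  shows "ennreal (u powr p) < ennreal (v powr p)"
  using assms by (subst ennreal_less_iff) (auto intro: powr_less_mono2)

lemma Lp_err_pow_Un_eq_if_optimal_outside_hull:
  fixes M :: "'a::euclidean_space measure"
  assumes "prob_space M" "sets M = sets borel" "p > 0"
    and H: "convex H" "closed H" "msupp M \<subseteq> H" "\<xi> \<notin> H"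
    and finite_err: "Lp_err_pow p M (\<Gamma> \<union> {closest_point H \<xi>}) < \<infinity>"
    and optimal: "Lp_err_pow p M (\<Gamma> \<union> {\<xi>}) \<le> Lp_err_pow p M (\<Gamma> \<union> {closest_point H \<xi>})"
  shows "Lp_err_pow p M (\<Gamma> \<union> {\<xi>}) = Lp_err_pow p M \<Gamma>"
proof -
  define \<pi> where "\<pi> = closest_point H \<xi>"
  define err where "err A x = ennreal (infdist x A powr p)" for A and x :: 'a
  have err_measurable[measurable]: "err A \<in> borel_measurable M" for A
    unfolding err_def by (rule borel_measurable_infdist_powr[OF assms(2)])
  have AE_in_H: "AE x in M. x \<in> H"
    using AE_in_msupp[OF assms(2)] by eventually_elim (use H(3) in blast)
  have closer: "dist x \<pi> < dist x \<xi>" if "x \<in> H" for x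
    unfolding \<pi>_def by (rule dist_closest_point_less[OF H(1,2) that H(4)])
  have projection_better: "AE x in M. err (\<Gamma> \<union> {\<pi>}) x \<le> err (\<Gamma> \<union> {\<xi>}) x"
    using AE_in_H
  proof eventually_elim
    case (elim x)
    show ?case
      unfolding err_def using closer[OF elim] assms(3)
      by (intro ennreal_powr_mono infdist_nonneg infdist_Un_singleton_mono) auto
  qed
  have "AE x in M. err (\<Gamma> \<union> {\<xi>}) x \<le> err (\<Gamma> \<union> {\<pi>}) x"
  proof (rule ccontr)
    assume "\<not> (AE x in M. err (\<Gamma> \<union> {\<xi>}) x \<le> err (\<Gamma> \<union> {\<pi>}) x)"
    then have "(\<integral>\<^sup>+x. err (\<Gamma> \<union> {\<pi>}) x \<partial>M) < (\<integral>\<^sup>+x. err (\<Gamma> \<union> {\<xi>}) x \<partial>M)"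
      using finite_err
      by (intro nn_integral_less err_measurable projection_better) (simp_all add: err_def Lp_err_pow_def \<pi>_def)
    then show False
      using optimal by (simp add: err_def Lp_err_pow_def \<pi>_def)
  qed
  with AE_in_H have \<xi>_never_nearest: "AE x in M. \<Gamma> \<noteq> {} \<and> infdist x \<Gamma> \<le> dist x \<xi>"
  proof eventually_elim
    case (elim x)
    show ?case
    proof (rule ccontr)
      assume "\<not> (\<Gamma> \<noteq> {} \<and> infdist x \<Gamma> \<le> dist x \<xi>)"
      then have "infdist x (\<Gamma> \<union> {\<pi>}) < infdist x (\<Gamma> \<union> {\<xi>})"
        using closer[OF elim(1)] by (intro infdist_Un_singleton_strict_mono) auto
      then show False
        using elim(2) assms(3) ennreal_powr_strict_mono[OF infdist_nonneg]
        by (auto simp: err_def not_le[symmetric])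
    qed
  qed
  have "\<Gamma> \<noteq> {}"
    using prob_space.AE_False[OF assms(1)] AE_mp[OF \<xi>_never_nearest] by blast
  have "(\<integral>\<^sup>+x. err (\<Gamma> \<union> {\<xi>}) x \<partial>M) = (\<integral>\<^sup>+x. err \<Gamma> x \<partial>M)"
    using \<xi>_never_nearest
    by (intro nn_integral_cong_AE, eventually_elim) (simp add: err_def infdist_Un_singleton min_def del: Un_insert_right)
  then show ?thesis
    using \<open>\<Gamma> \<noteq> {}\<close> by (simp add: err_def Lp_err_pow_def)
qed

lemma Lp_err_pow_Un_msupp_less:
  fixes M :: "'a::metric_space measure"
  assumes "sets M = sets borel" "p > 0"
    and "closed \<Gamma>" "s \<in> msupp M" "s \<notin> \<Gamma>"
    and finite_err: "Lp_err_pow p M (\<Gamma> \<union> {s}) < \<infinity>"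
  shows "Lp_err_pow p M (\<Gamma> \<union> {s}) < Lp_err_pow p M \<Gamma>"
proof (cases "\<Gamma> = {}")
  case True
  then show ?thesis
    using finite_err by (simp add: Lp_err_pow_def)
next
  case False
  define err where "err A x = ennreal (infdist x A powr p)" for A and x :: 'a
  have err_measurable[measurable]: "err A \<in> borel_measurable M" for A
    unfolding err_def by (rule borel_measurable_infdist_powr[OF assms(1)])
  define \<delta> where "\<delta> = infdist s \<Gamma>"
  have "\<delta> > 0"
    unfolding \<delta>_def by (rule infdist_pos_not_in_closed[OF assms(3) False assms(5)])
  then have ball_pos: "emeasure M (ball s (\<delta>/2)) > 0"
    using assms(4) unfolding msupp_def by auto
  have err_le: "err (\<Gamma> \<union> {s}) x \<le> err \<Gamma> x" for x
    unfolding err_def using assms(2)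
    by (intro ennreal_powr_mono infdist_nonneg infdist_mono) (use False in auto)
  \<comment> \<open>on the ball, \<open>s\<close> is closer than half of \<open>\<delta>\<close> while \<open>\<Gamma>\<close> is farther than half of \<open>\<delta>\<close>\<close>
  have err_less: "err (\<Gamma> \<union> {s}) x < err \<Gamma> x" if "x \<in> ball s (\<delta>/2)" for x
  proof -
    have "\<delta> \<le> infdist x \<Gamma> + dist s x"
      unfolding \<delta>_def by (rule infdist_triangle)
    then have "infdist x (\<Gamma> \<union> {s}) < infdist x \<Gamma>"
      using that infdist_le[of s "\<Gamma> \<union> {s}" x] by (simp add: dist_commute)
    then show ?thesis
      unfolding err_def using assms(2) by (intro ennreal_powr_strict_mono infdist_nonneg)
  qed
  have "\<not> (AE x in M. err \<Gamma> x \<le> err (\<Gamma> \<union> {s}) x)"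
  proof
    assume "AE x in M. err \<Gamma> x \<le> err (\<Gamma> \<union> {s}) x"
    then have "AE x in M. x \<notin> ball s (\<delta>/2)"
      by eventually_elim (use err_less in force)
    then have "emeasure M {x \<in> space M. x \<in> ball s (\<delta>/2)} = 0"
      by (rule emeasure_eq_0_AE)
    then show False
      using ball_pos by (simp add: sets_eq_imp_space_eq[OF assms(1)] del: mem_ball)
  qed
  then have "(\<integral>\<^sup>+x. err (\<Gamma> \<union> {s}) x \<partial>M) < (\<integral>\<^sup>+x. err \<Gamma> x \<partial>M)"
    using finite_err by (intro nn_integral_less err_measurable AE_I2 err_le) (simp_all add: err_def Lp_err_pow_def)
  then show ?thesis
    using False by (simp add: err_def Lp_err_pow_def)
qed

lemma greedy_quant_seq_in_closed_convex_hull: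
  fixes M :: "'a::euclidean_space measure" and a :: "nat \<Rightarrow> 'a"
  assumes "prob_space M" "sets M = sets borel" "p > 0"
    and moment: "(\<integral>\<^sup>+ x. ennreal (norm x powr p) \<partial>M) < \<infinity>"
    and greedy: "greedy_quant_seq p M a"
    and enough_support: "infinite (msupp M) \<or> Suc N \<le> card (msupp M)"
  shows "a (Suc N) \<in> closure (convex hull (msupp M))"
proof (rule ccontr)
  define H where "H = closure (convex hull (msupp M))"
  define \<Gamma> where "\<Gamma> = a ` {1..N}"
  assume "a (Suc N) \<notin> closure (convex hull (msupp M))"
  then have outside: "a (Suc N) \<notin> H"
    unfolding H_def .
  have "card \<Gamma> \<le> N"
    unfolding \<Gamma>_def using card_image_le[of "{1..N}" a] by simp
  then have "\<not> msupp M \<subseteq> \<Gamma>"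
    using enough_support card_mono[of \<Gamma> "msupp M"] finite_subset[of "msupp M" \<Gamma>]
    unfolding \<Gamma>_def by auto
  then obtain s where s: "s \<in> msupp M" "s \<notin> \<Gamma>"
    by blast
  have "msupp M \<subseteq> H"
    unfolding H_def by (meson hull_subset closure_subset subset_trans)
  then have H: "convex H" "closed H" "msupp M \<subseteq> H"
    unfolding H_def by (auto simp: convex_closure)
  have optimal: "Lp_err_pow p M (\<Gamma> \<union> {a (Suc N)}) \<le> Lp_err_pow p M (\<Gamma> \<union> {\<zeta>})" for \<zeta>
    using greedy unfolding greedy_quant_seq_def \<Gamma>_def by blast
  have finite_err: "Lp_err_pow p M (\<Gamma> \<union> {\<zeta>}) < \<infinity>" for \<zeta>
    using assms(3) by (intro Lp_err_pow_less_top[OF assms(1,2) _ moment]) auto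
  have "Lp_err_pow p M (\<Gamma> \<union> {a (Suc N)}) = Lp_err_pow p M \<Gamma>"
    by (rule Lp_err_pow_Un_eq_if_optimal_outside_hull[OF assms(1-3) H outside finite_err optimal])
  also have "\<dots> > Lp_err_pow p M (\<Gamma> \<union> {s})"
    unfolding \<Gamma>_def
    by (rule Lp_err_pow_Un_msupp_less[OF assms(2,3) _ s[unfolded \<Gamma>_def] finite_err[unfolded \<Gamma>_def]])
      (simp add: finite_imp_closed)
  finally show False
    using optimal[of s] by simp
qed

theorem proposition2p2:
  fixes M :: "'a::euclidean_space measure" and p :: real and a :: "nat \<Rightarrow> 'a"
  assumes "prob_space M"
    and "sets M = sets borel"
    and "p > 0"
    and "(\<integral>\<^sup>+ x. ennreal (norm x powr p) \<partial>M) < \<infinity>"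
    and "greedy_quant_seq p M a"
  shows "(\<forall>N. (infinite (msupp M) \<or> N \<le> card (msupp M)) \<longrightarrow>
            (\<forall>n\<in>{1..N}. a n \<in> closure (convex hull (msupp M))))
       \<and> (infinite (msupp M) \<longrightarrow> (\<forall>n\<ge>1. a n \<in> closure (convex hull (msupp M))))"
proof (intro conjI allI impI ballI)
  fix N n assume "infinite (msupp M) \<or> N \<le> card (msupp M)" and "n \<in> {1..N}"
  moreover obtain m where "n = Suc m"
    using \<open>n \<in> {1..N}\<close> by (cases n) auto
  ultimately show "a n \<in> closure (convex hull (msupp M))"
    using greedy_quant_seq_in_closed_convex_hull[OF assms, of m] by auto
next
  fix n :: nat assume "infinite (msupp M)" and "n \<ge> 1"
  moreover obtain m where "n = Suc m"
    using \<open>n \<ge> 1\<close> by (cases n) auto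
  ultimately show "a n \<in> closure (convex hull (msupp M))"
    using greedy_quant_seq_in_closed_convex_hull[OF assms, of m] by auto
qed

end
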